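(* Let $p\geq 5$ be a prime, let $G=\mathbb{S}_{2p}$ or $\mathbb{A}_{2p}$, and let $\mathcal{C}$ be a conjugacy class of non-trivial $p$-elements of $G$. Then $K_{\mathcal{C}}$ is irreducible.
   Context: For a finite group $G$ and a subset $\mathcal{C}\subseteq G\setminus\{1\}$ closed under conjugation, the Killing form $K_{\mathcal{C}}$ is the bilinear form on the complex vector space with basis $\mathcal{C}$ given on basis elements by $K_{\mathcal{C}}(a,b)=|C_G(ab)\cap\mathcal{C}|$. $K_{\mathcal{C}}$ is irreducible if the graph with vertex set $\mathcal{C}$, in which distinct $a,b$ are adjacent iff $C_G(ab)\cap\mathcal{C}\neq\emptyset$, is connected, and reducible otherwise. *)

theory Defs
  imports "HOL-Algebra.Sym_Groups" "HOL-Algebra.Multiplicative_Group" "HOL-Computational_Algebra.Primes"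
begin

definition conj_class :: "('a, 'b) monoid_scheme \<Rightarrow> 'a \<Rightarrow> 'a set" where
  "conj_class G a = {g \<otimes>\<^bsub>G\<^esub> a \<otimes>\<^bsub>G\<^esub> inv\<^bsub>G\<^esub> g | g. g \<in> carrier G}"

definition centralizer :: "('a, 'b) monoid_scheme \<Rightarrow> 'a \<Rightarrow> 'a set" where
  "centralizer G x = {g \<in> carrier G. g \<otimes>\<^bsub>G\<^esub> x = x \<otimes>\<^bsub>G\<^esub> g}"

definition p_element :: "('a, 'b) monoid_scheme \<Rightarrow> nat \<Rightarrow> 'a \<Rightarrow> bool" where
  "p_element G p a \<longleftrightarrow> a \<in> carrier G \<and> (\<exists>k. group.ord G a = p ^ k)"

definition killing_edges :: "('a, 'b) monoid_scheme \<Rightarrow> 'a set \<Rightarrow> ('a \<times> 'a) set" where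
  "killing_edges G C = {(a, b). a \<in> C \<and> b \<in> C \<and> a \<noteq> b \<and>
       centralizer G (a \<otimes>\<^bsub>G\<^esub> b) \<inter> C \<noteq> {}}"

definition killing_irreducible :: "('a, 'b) monoid_scheme \<Rightarrow> 'a set \<Rightarrow> bool" where
  "killing_irreducible G C \<longleftrightarrow> (\<forall>a\<in>C. \<forall>b\<in>C. (a, b) \<in> (killing_edges G C)\<^sup>*)"

end

theory Submission
  imports Defs
begin

text \<open>
  The graph is invariant under conjugation by \<open>S\<^sub>n\<close>, and \<open>S\<^sub>n\<close> is generated by
  transpositions, so it suffices to connect \<open>a\<close> with every \<open>t a t\<close>, \<open>t\<close> a transposition.
  A nontrivial \<open>p\<close>-element of \<open>S\<^sub>2\<^sub>p\<close> is conjugate to a \<open>p\<close>-cycle or to a product of two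
  disjoint \<open>p\<close>-cycles. A \<open>p\<close>-cycle \<open>a\<close> is adjacent to \<open>a\<^sup>-\<^sup>1\<close> (their product \<open>1\<close> is
  centralised by everything), and \<open>a\<^sup>-\<^sup>1\<close> is adjacent to \<open>t a t\<close>, since \<open>a\<^sup>-\<^sup>1 t a t\<close> moves
  at most four points and so commutes with a \<open>p\<close>-cycle on the remaining points. For a
  product \<open>a\<close> of two \<open>p\<close>-cycles and \<open>t\<close> joining the two cycles, \<open>a t a t = (a t)\<^sup>2\<close> is the
  square of a \<open>2 p\<close>-cycle, hence again conjugate to \<open>a\<close>, which makes \<open>a\<close> and \<open>t a t\<close>
  adjacent; the other transpositions are products of such crossing ones. Finally, in both
  cases \<open>a\<close> commutes with an odd permutation, so its classes in \<open>A\<^sub>2\<^sub>p\<close> and \<open>S\<^sub>2\<^sub>p\<close>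
  coincide and carry the same graph.
\<close>

lemma conj_permutes:
  assumes "g permutes S" "x permutes S"
  shows "g \<circ> x \<circ> inv' g permutes S"
  by (intro permutes_compose[OF permutes_inv] permutes_compose[OF assms(2)] assms(1))

lemma conj_comp_permutes:
  assumes "g permutes S" "h permutes S"
  shows "(g \<circ> h) \<circ> x \<circ> inv' (g \<circ> h) = g \<circ> (h \<circ> x \<circ> inv' h) \<circ> inv' g"
  using assms by (simp add: o_inv_distrib permutes_bij comp_assoc)

lemma conj_mult_permutes:
  assumes "g permutes S"
  shows "(g \<circ> x \<circ> inv' g) \<circ> (g \<circ> y \<circ> inv' g) = g \<circ> (x \<circ> y) \<circ> inv' g"
  using assms by (auto simp: fun_eq_iff permutes_inverses)

lemma conj_permutes_inj:
  assumes "g permutes S" "g \<circ> x \<circ> inv' g = g \<circ> y \<circ> inv' g"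
  shows "x = y"
proof -
  have "inv' g \<circ> (g \<circ> x \<circ> inv' g) \<circ> g = inv' g \<circ> (g \<circ> y \<circ> inv' g) \<circ> g"
    using assms(2) by simp
  then show ?thesis
    using assms(1) by (auto simp: fun_eq_iff permutes_inverses)
qed

lemma eq_conj_if_comp_eq:
  assumes "f permutes S" "a \<circ> f = f \<circ> s"
  shows "a = f \<circ> s \<circ> inv' f"
proof -
  have "a = a \<circ> f \<circ> inv' f"
    using assms(1) by (auto simp: fun_eq_iff permutes_inverses)
  then show ?thesis
    using assms(2) by simp
qed

lemma transpose_conj_permutes:
  assumes "g permutes S"
  shows "transpose (g x) (g y) = g \<circ> transpose x y \<circ> inv' g"
proof
  fix z
  have "transpose (g x) (g y) (g (inv' g z)) = g (transpose x y (inv' g z))"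
    using transpose_apply_commute[OF permutes_bij[OF assms]] permutes_inj[OF assms]
    by (simp add: inv_f_f)
  then show "transpose (g x) (g y) z = (g \<circ> transpose x y \<circ> inv' g) z"
    using permutes_inverses(1)[OF assms] by simp
qed

lemma comp_commute_if_disjoint_supports:
  assumes "inj c" "inj w" "\<And>x. w x \<noteq> x \<Longrightarrow> x \<in> X" "\<And>x. x \<in> X \<Longrightarrow> c x = x"
  shows "c \<circ> w = w \<circ> c"
proof
  fix x
  show "(c \<circ> w) x = (w \<circ> c) x"
  proof (cases "x \<in> X")
    case True
    have "w x \<in> X"
      using assms(2,3) True by (metis injD)
    then show ?thesis
      using True assms(4) by simp
  next
    case False
    have "c x \<notin> X"
      using assms(1,4) False by (metis injD)
    then show ?thesis
      using False assms(3) by (metis comp_apply)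
  qed
qed

lemma exists_permutes_image:
  assumes "finite S" "U \<subseteq> S" "V \<subseteq> S" "card U = card V"
  shows "\<exists>g. g permutes S \<and> g ` V = U"
proof -
  have fin: "finite U" "finite V"
    using assms finite_subset by auto
  then obtain h1 where h1: "bij_betw h1 V U"
    using finite_same_card_bij assms(4) by metis
  have "card (S - V) = card (S - U)"
    using card_Diff_subset fin assms(2-4) by metis
  then obtain h2 where h2: "bij_betw h2 (S - V) (S - U)"
    using finite_same_card_bij assms(1) by (metis finite_Diff)
  define g where "g x = (if x \<in> V then h1 x else if x \<in> S then h2 x else x)" for x
  have "bij_betw g (V \<union> (S - V)) (U \<union> (S - U))"
  proof (rule bij_betw_combine)
    show "bij_betw g V U"
      using h1 by (rule bij_betw_cong[THEN iffD1, rotated]) (simp add: g_def)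
    show "bij_betw g (S - V) (S - U)"
      using h2 by (rule bij_betw_cong[THEN iffD1, rotated]) (simp add: g_def)
  qed auto
  then have "bij_betw g S S"
    using assms(2,3) by (simp add: Un_absorb1 Un_Diff_cancel)
  then have "g permutes S"
    using assms(3) by (intro bij_imp_permutes) (auto simp: g_def)
  moreover have "g ` V = U"
    using bij_betw_imp_surj_on[OF h1] by (auto simp: g_def)
  ultimately show ?thesis
    by blast
qed

lemma exists_permutes_image_superset:
  assumes "finite S" "X \<subseteq> S" "V \<subseteq> S" "card X \<le> card V"
  shows "\<exists>g. g permutes S \<and> X \<subseteq> g ` V"
proof -
  have "finite X"
    using assms finite_subset by auto
  have "card V - card X \<le> card (S - X)"
    using assms card_Diff_subset[OF \<open>finite X\<close> assms(2)] card_mono[OF assms(1) assms(3)]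
    by linarith
  then obtain T where T: "T \<subseteq> S - X" "card T = card V - card X" "finite T"
    using obtain_subset_with_card_n by blast
  have "card (X \<union> T) = card V"
    using card_Un_disjoint[OF \<open>finite X\<close> T(3)] T assms(4) by auto
  then obtain g where "g permutes S" "g ` V = X \<union> T"
    using exists_permutes_image[OF assms(1) _ assms(3)] T(1) assms(2) by blast
  then show ?thesis
    by blast
qed

lemma funpow_comp_commute:
  assumes "f \<circ> g = g \<circ> f"
  shows "(f ^^ m) \<circ> g = g \<circ> (f ^^ m)"
proof -
  have "(f ^^ m) (g x) = g ((f ^^ m) x)" for x
    using fun_cong[OF assms] by (induction m) simp_all
  then show ?thesis
    by (simp add: fun_eq_iff)
qed

lemma funpow_fixpoint: "f x = x \<Longrightarrow> (f ^^ m) x = x"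
  by (induction m) auto

section \<open>Symmetric and alternating groups\<close>

lemma conj_class_sym_group:
  "conj_class (sym_group n) a = {g \<circ> a \<circ> inv' g | g. g permutes {1..n}}"
  unfolding conj_class_def sym_group_carrier[symmetric] by (metis sym_group_mult sym_group_inv_equality)

lemma conj_class_alt_group:
  "conj_class (alt_group n) a = {g \<circ> a \<circ> inv' g | g. g permutes {1..n} \<and> evenperm g}"
  unfolding conj_class_def alt_group_carrier[symmetric] by (metis alt_group_mult alt_group_inv_equality)

lemma killing_edges_sym_group:
  "killing_edges (sym_group n) C = {(x, y). x \<in> C \<and> y \<in> C \<and> x \<noteq> y \<and>
     (\<exists>c\<in>C. c permutes {1..n} \<and> c \<circ> (x \<circ> y) = (x \<circ> y) \<circ> c)}"
  unfolding killing_edges_def centralizer_def by (auto simp: sym_group_carrier sym_group_mult)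

lemma killing_edges_alt_group:
  assumes "C \<subseteq> carrier (alt_group n)"
  shows "killing_edges (alt_group n) C = killing_edges (sym_group n) C"
proof -
  have "centralizer (alt_group n) x \<inter> C = centralizer (sym_group n) x \<inter> C" for x
    using assms unfolding centralizer_def
    by (auto simp: alt_group_mult sym_group_mult alt_group_carrier sym_group_carrier)
  then show ?thesis
    unfolding killing_edges_def by (simp add: alt_group_mult sym_group_mult)
qed

lemma pow_sym_group: "x [^]\<^bsub>sym_group n\<^esub> (m::nat) = x ^^ m"
  by (induction m) (simp_all add: sym_group_mult sym_group_one funpow_Suc_right del: funpow.simps)

lemma pow_alt_group: "x [^]\<^bsub>alt_group n\<^esub> (m::nat) = x ^^ m"
  by (induction m) (simp_all add: alt_group_mult alt_group_one funpow_Suc_right del: funpow.simps)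

lemma conj_class_sym_group_conj:
  assumes "g permutes {1..n}"
  shows "conj_class (sym_group n) (g \<circ> a \<circ> inv' g) = conj_class (sym_group n) a"
proof -
  have "(\<exists>h. y = h \<circ> (g \<circ> a \<circ> inv' g) \<circ> inv' h \<and> h permutes {1..n})
      \<longleftrightarrow> (\<exists>k. y = k \<circ> a \<circ> inv' k \<and> k permutes {1..n})" for y
  proof
    assume "\<exists>h. y = h \<circ> (g \<circ> a \<circ> inv' g) \<circ> inv' h \<and> h permutes {1..n}"
    then obtain h where h: "y = h \<circ> (g \<circ> a \<circ> inv' g) \<circ> inv' h" "h permutes {1..n}"
      by blast
    then show "\<exists>k. y = k \<circ> a \<circ> inv' k \<and> k permutes {1..n}"
      using conj_comp_permutes[OF h(2) assms] permutes_compose[OF assms h(2)] by metis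
  next
    assume "\<exists>k. y = k \<circ> a \<circ> inv' k \<and> k permutes {1..n}"
    then obtain k where k: "y = k \<circ> a \<circ> inv' k" "k permutes {1..n}"
      by blast
    let ?h = "k \<circ> inv' g"
    have h: "?h permutes {1..n}"
      using permutes_compose[OF permutes_inv[OF assms] k(2)] .
    have "?h \<circ> g = k"
      using permutes_inv_o(2)[OF assms] by (simp add: comp_assoc)
    then have "y = ?h \<circ> (g \<circ> a \<circ> inv' g) \<circ> inv' ?h"
      using conj_comp_permutes[OF h assms] k(1) by simp
    then show "\<exists>h. y = h \<circ> (g \<circ> a \<circ> inv' g) \<circ> inv' h \<and> h permutes {1..n}"
      using h by blast
  qed
  then show ?thesis
    unfolding conj_class_sym_group by blast
qed

lemma conj_class_subset_carrier:
  assumes "group G" "a \<in> carrier G"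
  shows "conj_class G a \<subseteq> carrier G"
proof -
  interpret group G
    by (rule assms(1))
  show ?thesis
    unfolding conj_class_def using assms(2) by auto
qed

definition commutes_with_odd :: "nat \<Rightarrow> (nat \<Rightarrow> nat) \<Rightarrow> bool" where
  "commutes_with_odd n a \<longleftrightarrow> (\<exists>h. h permutes {1..n} \<and> \<not> evenperm h \<and> h \<circ> a = a \<circ> h)"

lemma evenperm_conj:
  assumes "permutation f" "permutation h"
  shows "evenperm (f \<circ> h \<circ> inv' f) = evenperm h"
  using evenperm_comp[OF permutation_compose[OF assms] permutation_inverse[OF assms(1)]]
    evenperm_comp[OF assms] evenperm_inv[OF assms(1)]
  by (cases "evenperm f"; cases "evenperm h") simp_all

lemma commutes_with_odd_conj:
  assumes "g permutes {1..n}" "commutes_with_odd n a"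
  shows "commutes_with_odd n (g \<circ> a \<circ> inv' g)"
proof -
  obtain h where h: "h permutes {1..n}" "\<not> evenperm h" "h \<circ> a = a \<circ> h"
    using assms(2) unfolding commutes_with_odd_def by blast
  have "permutation g" "permutation h"
    using assms(1) h(1) permutation_permutes by blast+
  then have "\<not> evenperm (g \<circ> h \<circ> inv' g)"
    using evenperm_conj h(2) by blast
  moreover have "(g \<circ> h \<circ> inv' g) \<circ> (g \<circ> a \<circ> inv' g) = (g \<circ> a \<circ> inv' g) \<circ> (g \<circ> h \<circ> inv' g)"
    using h(3) by (simp add: conj_mult_permutes[OF assms(1)])
  ultimately show ?thesis
    unfolding commutes_with_odd_def using conj_permutes[OF assms(1) h(1)] by blast
qed

lemma conj_class_alt_group_eq_sym:
  assumes "commutes_with_odd n a"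
  shows "conj_class (alt_group n) a = conj_class (sym_group n) a"
proof
  obtain h where h: "h permutes {1..n}" "\<not> evenperm h" "h \<circ> a = a \<circ> h"
    using assms unfolding commutes_with_odd_def by blast
  show "conj_class (alt_group n) a \<subseteq> conj_class (sym_group n) a"
    unfolding conj_class_alt_group conj_class_sym_group by blast
  show "conj_class (sym_group n) a \<subseteq> conj_class (alt_group n) a"
  proof
    fix x
    assume "x \<in> conj_class (sym_group n) a"
    then obtain g where g: "g permutes {1..n}" "x = g \<circ> a \<circ> inv' g"
      unfolding conj_class_sym_group by blast
    show "x \<in> conj_class (alt_group n) a"
    proof (cases "evenperm g")
      case True
      then show ?thesis
        unfolding conj_class_alt_group using g by blast
    next
      case False
      have "permutation g" "permutation h"
        using g(1) h(1) permutation_permutes by blast+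
      then have "evenperm (g \<circ> h)"
        using evenperm_comp False h(2) by blast
      moreover have "h \<circ> a \<circ> inv' h = a"
        using h(3) permutes_inv_o(1)[OF h(1)] by (metis comp_assoc comp_id)
      then have "x = (g \<circ> h) \<circ> a \<circ> inv' (g \<circ> h)"
        using conj_comp_permutes[OF g(1) h(1)] g(2) by simp
      ultimately show ?thesis
        unfolding conj_class_alt_group using permutes_compose[OF h(1) g(1)] by blast
    qed
  qed
qed

lemma killing_irreducible_alt_group:
  assumes "a \<in> carrier (alt_group n)" "commutes_with_odd n a"
    and "killing_irreducible (sym_group n) (conj_class (sym_group n) a)"
  shows "killing_irreducible (alt_group n) (conj_class (alt_group n) a)"
proof -
  have class_eq: "conj_class (alt_group n) a = conj_class (sym_group n) a"
    using conj_class_alt_group_eq_sym[OF assms(2)] .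
  then have "conj_class (sym_group n) a \<subseteq> carrier (alt_group n)"
    using conj_class_subset_carrier[OF alt_group_is_group assms(1)] by simp
  then have "killing_edges (alt_group n) (conj_class (sym_group n) a)
      = killing_edges (sym_group n) (conj_class (sym_group n) a)"
    by (rule killing_edges_alt_group)
  then show ?thesis
    using assms(3) unfolding killing_irreducible_def class_eq by simp
qed

section \<open>The Killing graph of a conjugacy class of the symmetric group\<close>

locale sym_class =
  fixes n :: nat and a :: "nat \<Rightarrow> nat"
  assumes a_permutes: "a permutes {1..n}"
begin

abbreviation "S \<equiv> {1..n}"
abbreviation "C \<equiv> conj_class (sym_group n) a"
abbreviation "E \<equiv> killing_edges (sym_group n) C"

abbreviation swap_connected :: "nat \<Rightarrow> nat \<Rightarrow> bool" where
  "swap_connected u v \<equiv> (transpose u v \<circ> a \<circ> transpose u v, a) \<in> E\<^sup>*"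

lemma C_eq: "C = {g \<circ> a \<circ> inv' g | g. g permutes S}"
  by (rule conj_class_sym_group)

lemma a_in_C: "a \<in> C"
  unfolding C_eq by (rule CollectI, rule exI[of _ id]) simp

lemma C_permutes: "b \<in> C \<Longrightarrow> b permutes S"
  unfolding C_eq using a_permutes conj_permutes by blast

lemma conj_in_C:
  assumes "b \<in> C" "g permutes S"
  shows "g \<circ> b \<circ> inv' g \<in> C"
proof -
  obtain h where h: "h permutes S" "b = h \<circ> a \<circ> inv' h"
    using assms(1) unfolding C_eq by auto
  have "g \<circ> b \<circ> inv' g = (g \<circ> h) \<circ> a \<circ> inv' (g \<circ> h)"
    using conj_comp_permutes[OF assms(2) h(1)] h(2) by simp
  then show ?thesis
    unfolding C_eq using permutes_compose[OF h(1) assms(2)] by blast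
qed

lemma edge_iff: "(x, y) \<in> E \<longleftrightarrow> x \<in> C \<and> y \<in> C \<and> x \<noteq> y \<and>
     (\<exists>c\<in>C. c \<circ> (x \<circ> y) = (x \<circ> y) \<circ> c)"
  unfolding killing_edges_sym_group using C_permutes by blast

lemma edge_conj:
  assumes "(x, y) \<in> E" "g permutes S"
  shows "(g \<circ> x \<circ> inv' g, g \<circ> y \<circ> inv' g) \<in> E"
proof -
  obtain c where c: "c \<in> C" "c \<circ> (x \<circ> y) = (x \<circ> y) \<circ> c"
    and xy: "x \<in> C" "y \<in> C" "x \<noteq> y"
    using assms(1) unfolding edge_iff by blast
  have "(g \<circ> c \<circ> inv' g) \<circ> ((g \<circ> x \<circ> inv' g) \<circ> (g \<circ> y \<circ> inv' g)) =
        ((g \<circ> x \<circ> inv' g) \<circ> (g \<circ> y \<circ> inv' g)) \<circ> (g \<circ> c \<circ> inv' g)"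
    using c(2) by (simp add: conj_mult_permutes[OF assms(2)])
  moreover have "g \<circ> x \<circ> inv' g \<noteq> g \<circ> y \<circ> inv' g"
    using conj_permutes_inj[OF assms(2)] xy(3) by blast
  ultimately show ?thesis
    unfolding edge_iff using conj_in_C c(1) xy(1,2) assms(2) by blast
qed

lemma path_conj:
  assumes "(x, y) \<in> E\<^sup>*" "g permutes S"
  shows "(g \<circ> x \<circ> inv' g, g \<circ> y \<circ> inv' g) \<in> E\<^sup>*"
  using assms(1)
proof (induction rule: rtrancl_induct)
  case (step y z)
  then show ?case
    using edge_conj[OF step(2) assms(2)] by (meson rtrancl.rtrancl_into_rtrancl)
qed simp

text \<open>Conjugation by \<open>inv' x\<close> turns the product \<open>x \<circ> y\<close> into \<open>y \<circ> x\<close>.\<close>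
lemma edge_sym:
  assumes "(x, y) \<in> E"
  shows "(y, x) \<in> E"
proof -
  obtain c where c: "c \<in> C" "c \<circ> (x \<circ> y) = (x \<circ> y) \<circ> c"
    and xy: "x \<in> C" "y \<in> C" "x \<noteq> y"
    using assms unfolding edge_iff by blast
  have x: "x permutes S"
    using C_permutes xy(1) by blast
  let ?c' = "inv' x \<circ> c \<circ> inv' (inv' x)"
  have yx: "inv' x \<circ> (x \<circ> y) \<circ> inv' (inv' x) = y \<circ> x"
    using x by (auto simp: fun_eq_iff permutes_inverses permutes_inv_inv)
  have "?c' \<circ> (inv' x \<circ> (x \<circ> y) \<circ> inv' (inv' x)) = (inv' x \<circ> (x \<circ> y) \<circ> inv' (inv' x)) \<circ> ?c'"
    using c(2) by (simp add: conj_mult_permutes[OF permutes_inv[OF x]])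
  then have "?c' \<circ> (y \<circ> x) = (y \<circ> x) \<circ> ?c'"
    by (simp only: yx)
  moreover have "?c' \<in> C"
    using conj_in_C[OF c(1) permutes_inv[OF x]] .
  ultimately show ?thesis
    unfolding edge_iff using xy by blast
qed

lemma path_sym:
  assumes "(x, y) \<in> E\<^sup>*"
  shows "(y, x) \<in> E\<^sup>*"
  using assms
proof (induction rule: rtrancl_induct)
  case (step y z)
  then show ?case
    using edge_sym[OF step(2)] by (meson converse_rtrancl_into_rtrancl)
qed simp

lemma edge_inv:
  assumes "inv' a \<in> C" "a \<noteq> inv' a"
  shows "(a, inv' a) \<in> E"
  unfolding edge_iff using assms a_in_C permutes_inv_o(1)[OF a_permutes] by auto

lemma edge_if_product_in_C:
  assumes "x \<in> C" "y \<in> C" "x \<noteq> y" "x \<circ> y \<in> C"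
  shows "(x, y) \<in> E"
  unfolding edge_iff using assms by blast

lemma edge_if_fixes_support:
  assumes "x \<in> C" "y \<in> C" "x \<noteq> y" "c \<in> C" "\<And>z. (x \<circ> y) z \<noteq> z \<Longrightarrow> c z = z"
  shows "(x, y) \<in> E"
proof -
  have "inj c" "inj (x \<circ> y)"
    using C_permutes assms(1,2,4) permutes_inj permutes_compose by blast+
  then have "c \<circ> (x \<circ> y) = (x \<circ> y) \<circ> c"
    by (rule comp_commute_if_disjoint_supports[where X = "{z. (x \<circ> y) z \<noteq> z}"])
      (use assms(5) in auto)
  then show ?thesis
    unfolding edge_iff using assms(1-4) by blast
qed

lemma path_conj_comp:
  assumes "g permutes S" "h permutes S"
    and "(g \<circ> a \<circ> inv' g, a) \<in> E\<^sup>*" "(h \<circ> a \<circ> inv' h, a) \<in> E\<^sup>*"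
  shows "((g \<circ> h) \<circ> a \<circ> inv' (g \<circ> h), a) \<in> E\<^sup>*"
  using path_conj[OF assms(4,1)] assms(3) conj_comp_permutes[OF assms(1,2)]
  by (metis rtrancl_trans)

lemma swap_connected_commute: "swap_connected u v \<longleftrightarrow> swap_connected v u"
  by (simp add: transpose_commute)

lemma swap_connected_conj:
  assumes "\<rho> permutes S" "\<rho> \<circ> a = a \<circ> \<rho>" "swap_connected u v"
  shows "swap_connected (\<rho> u) (\<rho> v)"
proof -
  have a_eq: "\<rho> \<circ> a \<circ> inv' \<rho> = a"
    using eq_conj_if_comp_eq[OF assms(1) assms(2)[symmetric]] by simp
  have comm: "a (\<rho> z) = \<rho> (a z)" for z
    using fun_cong[OF assms(2), of z] by simp
  have "transpose (\<rho> u) (\<rho> v) \<circ> a \<circ> transpose (\<rho> u) (\<rho> v)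
      = \<rho> \<circ> (transpose u v \<circ> a \<circ> transpose u v) \<circ> inv' \<rho>"
    unfolding transpose_conj_permutes[OF assms(1)]
    using assms(1) by (auto simp: fun_eq_iff permutes_inverses comm)
  then show ?thesis
    using path_conj[OF assms(3,1)] a_eq by simp
qed

text \<open>Transpositions generate the symmetric group.\<close>
lemma irreducible_if_swap_connected:
  assumes "\<And>u v. u \<in> S \<Longrightarrow> v \<in> S \<Longrightarrow> u \<noteq> v \<Longrightarrow> swap_connected u v"
  shows "killing_irreducible (sym_group n) C"
proof -
  have to_a: "(g \<circ> a \<circ> inv' g, a) \<in> E\<^sup>*" if "g permutes S" for g
    using that finite_atLeastAtMost
  proof (induction rule: permutes_induct)
    case (swap u v g)
    have "(transpose u v \<circ> a \<circ> inv' (transpose u v), a) \<in> E\<^sup>*"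
      using assms[OF swap(1-3)] by simp
    then show ?case
      using path_conj_comp[OF permutes_swap_id[OF swap(1,2)] swap(4) _ swap(5)] by blast
  qed simp
  show ?thesis
    unfolding killing_irreducible_def
  proof (intro ballI)
    fix x y
    assume "x \<in> C" "y \<in> C"
    then obtain g h where "g permutes S" "x = g \<circ> a \<circ> inv' g" "h permutes S" "y = h \<circ> a \<circ> inv' h"
      unfolding C_eq by blast
    then show "(x, y) \<in> E\<^sup>*"
      using to_a path_sym by (meson rtrancl_trans)
  qed
qed

lemma swap_connected_trans:
  assumes "u \<in> S" "v \<in> S" "w \<in> S" "w \<noteq> u" "w \<noteq> v"
    and "swap_connected u w" "swap_connected w v"
  shows "swap_connected u v"
proof (cases "u = v")
  case False
  have tuw: "transpose u w permutes S" and twv: "transpose w v permutes S"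
    using assms(1-3) by (simp_all add: permutes_swap_id)
  have "((transpose w v \<circ> transpose u w) \<circ> a \<circ> inv' (transpose w v \<circ> transpose u w), a) \<in> E\<^sup>*"
    using path_conj_comp[OF twv tuw] assms(6,7) by simp
  then have "((transpose u w \<circ> (transpose w v \<circ> transpose u w)) \<circ> a
      \<circ> inv' (transpose u w \<circ> (transpose w v \<circ> transpose u w)), a) \<in> E\<^sup>*"
    using path_conj_comp[OF tuw permutes_compose[OF tuw twv]] assms(6) by simp
  moreover have "transpose u w \<circ> (transpose w v \<circ> transpose u w) = transpose u v"
    using transpose_comp_triple[of u v w] False assms(5) by (simp add: comp_assoc)
  ultimately show ?thesis
    by simp
qed simp

end

section \<open>Conjugacy classes of \<open>p\<close>-elements of \<open>S\<^sub>2\<^sub>p\<close>\<close>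

lemma inj_on_funpow_orbit:
  assumes "permutation a"
  shows "inj_on (\<lambda>i. (a ^^ i) x) {0..<least_power a x}"
  using cycle_of_permutation[OF assms, of x] by (simp add: distinct_map)

lemma least_power_le_card:
  assumes "a permutes S" "finite S" "x \<in> S"
  shows "least_power a x \<le> card S"
proof -
  have "(\<lambda>i. (a ^^ i) x) ` {0..<least_power a x} \<subseteq> S"
    using permutes_in_image[OF permutes_funpow[OF assms(1)]] assms(3) by blast
  then show ?thesis
    using card_inj_on_le[OF inj_on_funpow_orbit] permutation_permutes assms(1,2)
    by (metis card_atLeastLessThan diff_zero)
qed

lemma least_power_eq_prime:
  assumes "permutation a" "prime p" "(a ^^ p) x = x" "a x \<noteq> x"
  shows "least_power a x = p"
proof -
  have "least_power a x dvd p"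
    using least_power_minimal[OF assms(3)] .
  moreover have "least_power a x \<noteq> 1"
    using least_power_of_permutation(1)[OF assms(1), of x] assms(4) by auto
  ultimately show ?thesis
    using assms(2) unfolding prime_nat_iff by blast
qed

text \<open>Orbits have length at most \<open>card S < p\<^sup>2\<close>, so a \<open>p\<close>-power order forces order dividing \<open>p\<close>.\<close>
lemma funpow_prime_eq_id:
  assumes "prime p" "a permutes S" "finite S" "card S < p\<^sup>2" "a ^^ (p ^ k) = id"
  shows "a ^^ p = id"
proof
  fix x
  show "(a ^^ p) x = id x"
  proof (cases "x \<in> S")
    case False
    then show ?thesis
      using permutes_not_in[OF permutes_funpow[OF assms(2)]] by simp
  next
    case True
    have perm: "permutation a"
      using assms(2,3) permutation_permutes by blast
    have "(a ^^ (p ^ k)) x = x"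
      using assms(5) by simp
    then have "least_power a x dvd p ^ k"
      by (rule least_power_minimal)
    then obtain i where i: "least_power a x = p ^ i"
      using divides_primepow_nat[OF assms(1)] by blast
    have "p ^ i < p ^ 2"
      using least_power_le_card[OF assms(2,3) True] assms(4) i by simp
    then have "i < 2"
      using power_less_imp_less_exp prime_gt_1_nat[OF assms(1)] by blast
    then have "i = 0 \<or> i = 1"
      by linarith
    then have "least_power a x dvd p"
      using i by auto
    then show ?thesis
      using least_power_dvd[OF perm] by simp
  qed
qed

definition pcycle :: "nat \<Rightarrow> nat \<Rightarrow> nat" where
  "pcycle p k = (if 1 \<le> k \<and> k < p then Suc k else if k = p then 1 else k)"

definition double_pcycle :: "nat \<Rightarrow> nat \<Rightarrow> nat" where
  "double_pcycle p k = (if 1 \<le> k \<and> k < p then Suc k else if k = p then 1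
     else if p < k \<and> k < 2 * p then Suc k else if k = 2 * p then Suc p else k)"

lemma pcycle_permutes: "pcycle p permutes {1..n}" if "1 \<le> p" "p \<le> n"
  by (rule inj_imp_permutes) (use that in \<open>auto simp: pcycle_def inj_on_def split: if_splits\<close>)

lemma double_pcycle_permutes: "double_pcycle p permutes {1..2 * p}" if "1 \<le> p"
  by (rule inj_imp_permutes) (use that in \<open>auto simp: double_pcycle_def inj_on_def split: if_splits\<close>)

lemma double_pcycle_lower: "i \<le> p \<Longrightarrow> double_pcycle p i = pcycle p i"
  by (simp add: double_pcycle_def pcycle_def)

lemma double_pcycle_upper: "p < i \<Longrightarrow> i \<le> 2 * p \<Longrightarrow> double_pcycle p i = p + pcycle p (i - p)"
  by (auto simp: double_pcycle_def pcycle_def)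

definition concat_enum :: "nat \<Rightarrow> (nat \<Rightarrow> nat) \<Rightarrow> (nat \<Rightarrow> nat) \<Rightarrow> nat \<Rightarrow> nat" where
  "concat_enum p g h i =
     (if 1 \<le> i \<and> i \<le> p then g (i - 1) else if p < i \<and> i \<le> 2 * p then h (i - p - 1) else i)"

lemma concat_enum_permutes:
  assumes "inj_on g {0..<p}" "inj_on h {0..<p}" "g ` {0..<p} \<inter> h ` {0..<p} = {}"
    and "g ` {0..<p} \<subseteq> {1..2 * p}" "h ` {0..<p} \<subseteq> {1..2 * p}"
  shows "concat_enum p g h permutes {1..2 * p}"
proof (rule inj_imp_permutes)
  have in_g: "concat_enum p g h k \<in> g ` {0..<p}" if "1 \<le> k" "k \<le> p" for k
    using that by (intro image_eqI[of _ _ "k - 1"]) (auto simp: concat_enum_def)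
  have in_h: "concat_enum p g h k \<in> h ` {0..<p}" if "p < k" "k \<le> 2 * p" for k
    using that by (intro image_eqI[of _ _ "k - p - 1"]) (auto simp: concat_enum_def)
  show "inj_on (concat_enum p g h) {1..2 * p}"
  proof (rule inj_onI)
    fix i j
    assume ij: "i \<in> {1..2 * p}" "j \<in> {1..2 * p}" "concat_enum p g h i = concat_enum p g h j"
    consider "i \<le> p" "j \<le> p" | "i \<le> p" "p < j" | "p < i" "j \<le> p" | "p < i" "p < j"
      by linarith
    then show "i = j"
    proof cases
      case 1
      then have "i - 1 = j - 1"
        using ij assms(1) by (auto simp: concat_enum_def inj_on_def)
      with ij(1,2) show ?thesis
        by (simp only: atLeastAtMost_iff) linarith
    next
      case 2
      then show ?thesis
        using in_g[of i] in_h[of j] ij assms(3) by auto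
    next
      case 3
      then show ?thesis
        using in_g[of j] in_h[of i] ij assms(3) by auto
    next
      case 4
      then have "i - p - 1 = j - p - 1"
        using ij assms(2) by (auto simp: concat_enum_def inj_on_def)
      with ij(1,2) 4 show ?thesis
        by simp
    qed
  qed
  show "concat_enum p g h k \<in> {1..2 * p}" if "k \<in> {1..2 * p}" for k
    using that in_g[of k] in_h[of k] assms(4,5) by force
qed (auto simp: concat_enum_def)

locale perm_of_prime_order =
  fixes p :: nat and a :: "nat \<Rightarrow> nat"
  assumes prime: "prime p" and a_permutes: "a permutes {1..2 * p}" and a_pow: "a ^^ p = id"
begin

lemma p_pos: "p > 0"
  using prime prime_gt_0_nat by blast

definition orbit :: "nat \<Rightarrow> nat set" where
  "orbit x = (\<lambda>i. (a ^^ i) x) ` {0..<p}"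

lemma funpow_in_orbit: "(a ^^ m) x \<in> orbit x"
proof -
  have "(a ^^ m) x = (a ^^ (m mod p)) x"
    using funpow_mod_eq[of p a x m] a_pow by simp
  then show ?thesis
    unfolding orbit_def using p_pos by auto
qed

lemma orbit_subset: "x \<in> {1..2 * p} \<Longrightarrow> orbit x \<subseteq> {1..2 * p}"
  unfolding orbit_def using permutes_in_image[OF permutes_funpow[OF a_permutes]] by auto

lemma inj_on_orbit:
  assumes "a x \<noteq> x"
  shows "inj_on (\<lambda>i. (a ^^ i) x) {0..<p}"
proof -
  have perm: "permutation a"
    using a_permutes permutation_permutes by blast
  have "least_power a x = p"
    by (rule least_power_eq_prime[OF perm prime]) (use a_pow assms in simp_all)
  then show ?thesis
    using inj_on_funpow_orbit[OF perm] by metis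
qed

lemma orbit_disjoint:
  assumes "y \<notin> orbit x"
  shows "orbit y \<inter> orbit x = {}"
proof -
  have "(a ^^ m) y \<notin> orbit x" for m
  proof
    assume "(a ^^ m) y \<in> orbit x"
    then obtain j where j: "(a ^^ m) y = (a ^^ j) x"
      unfolding orbit_def by auto
    have "a ^^ (m * p) = id"
      by (induction m) (simp_all add: funpow_add a_pow)
    then have "y = (a ^^ (m * p)) y"
      by simp
    also have "m * p = m * (p - 1) + m"
      using p_pos by (cases p) simp_all
    also have "(a ^^ (m * (p - 1) + m)) y = (a ^^ (m * (p - 1))) ((a ^^ m) y)"
      by (simp add: funpow_add)
    also have "\<dots> = (a ^^ (m * (p - 1) + j)) x"
      by (simp add: j funpow_add)
    finally show False
      using assms funpow_in_orbit by metis
  qed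
  then show ?thesis
    unfolding orbit_def by auto
qed

lemma orbit_step:
  assumes "1 \<le> i" "i \<le> p"
  shows "a ((a ^^ (i - 1)) x) = (a ^^ (pcycle p i - 1)) x"
proof (cases "i = p")
  case True
  have "a ((a ^^ (p - 1)) x) = (a ^^ p) x"
    using p_pos by (metis Suc_diff_1 comp_apply funpow.simps(2))
  then show ?thesis
    using True p_pos a_pow by (simp add: pcycle_def)
next
  case False
  have "a ((a ^^ (i - 1)) x) = (a ^^ i) x"
    using assms(1) by (metis Suc_diff_1 comp_apply funpow.simps(2) less_eq_Suc_le One_nat_def)
  then show ?thesis
    using False assms by (simp add: pcycle_def)
qed

lemma conj_pcycle_if_fixes_outside_orbit:
  assumes "x \<in> {1..2 * p}" "a x \<noteq> x" "\<forall>y \<in> {1..2 * p} - orbit x. a y = y"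
  shows "\<exists>f. f permutes {1..2 * p} \<and> a \<circ> f = f \<circ> pcycle p"
proof -
  let ?R = "{1..2 * p} - orbit x"
  have "card (orbit x) = p"
    unfolding orbit_def using card_image[OF inj_on_orbit[OF assms(2)]] by simp
  then have "card ?R = p"
    using card_Diff_subset[OF finite_subset[OF orbit_subset[OF assms(1)]] orbit_subset[OF assms(1)]]
    by simp
  then obtain h where h: "bij_betw h {0..<p} ?R"
    using finite_same_card_bij[of "{0..<p}" ?R] by auto
  define f where "f = concat_enum p (\<lambda>i. (a ^^ i) x) h"
  have "f permutes {1..2 * p}"
    unfolding f_def
  proof (rule concat_enum_permutes)
    show "(\<lambda>i. (a ^^ i) x) ` {0..<p} \<inter> h ` {0..<p} = {}"
      using bij_betw_imp_surj_on[OF h] by (auto simp: orbit_def)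
  qed (use inj_on_orbit[OF assms(2)] orbit_subset[OF assms(1)] h in
      \<open>auto simp: orbit_def bij_betw_def\<close>)
  moreover have "a (f i) = f (pcycle p i)" for i
  proof -
    consider "1 \<le> i" "i \<le> p" | "p < i" "i \<le> 2 * p" | "i \<notin> {1..2 * p}"
      by force
    then show ?thesis
    proof cases
      case 1
      then show ?thesis
        using orbit_step[OF 1] p_pos by (simp add: f_def concat_enum_def pcycle_def)
    next
      case 2
      have "h (i - p - 1) \<in> ?R"
        using 2 bij_betwE[OF h] by simp
      then show ?thesis
        using 2 assms(3) by (simp add: f_def concat_enum_def pcycle_def)
    next
      case 3
      then show ?thesis
        using permutes_not_in[OF a_permutes 3] p_pos
        by (auto simp: f_def concat_enum_def pcycle_def)
    qed
  qed
  ultimately show ?thesis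
    by (auto simp: fun_eq_iff)
qed

lemma conj_double_pcycle_if_two_orbits:
  assumes "x \<in> {1..2 * p}" "a x \<noteq> x" "y \<in> {1..2 * p}" "a y \<noteq> y" "y \<notin> orbit x"
  shows "\<exists>f. f permutes {1..2 * p} \<and> a \<circ> f = f \<circ> double_pcycle p"
proof -
  define f where "f = concat_enum p (\<lambda>i. (a ^^ i) x) (\<lambda>i. (a ^^ i) y)"
  have "f permutes {1..2 * p}"
    unfolding f_def
    by (rule concat_enum_permutes)
      (use inj_on_orbit assms orbit_disjoint[OF assms(5)] orbit_subset in
       \<open>simp_all add: orbit_def Int_commute\<close>)
  moreover have "a (f i) = f (double_pcycle p i)" for i
  proof -
    consider "1 \<le> i" "i \<le> p" | "p < i" "i \<le> 2 * p" | "i \<notin> {1..2 * p}"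
      by force
    then show ?thesis
    proof cases
      case 1
      then show ?thesis
        using orbit_step[OF 1] by (simp add: f_def concat_enum_def pcycle_def double_pcycle_lower)
    next
      case 2
      then have i: "1 \<le> i - p" "i - p \<le> p"
        by simp_all
      then have "a ((a ^^ (i - p - 1)) y) = (a ^^ (pcycle p (i - p) - 1)) y"
        by (rule orbit_step)
      then show ?thesis
        using 2 i by (simp add: f_def concat_enum_def pcycle_def double_pcycle_upper)
    next
      case 3
      then show ?thesis
        using permutes_not_in[OF a_permutes 3] p_pos
        by (auto simp: f_def concat_enum_def double_pcycle_def)
    qed
  qed
  ultimately show ?thesis
    by (auto simp: fun_eq_iff)
qed

end

lemma p_element_conj_pcycle_or_double_pcycle:
  assumes "prime p" "p \<ge> 3" "a permutes {1..2 * p}" "a \<noteq> id" "a ^^ (p ^ k) = id"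
  shows "\<exists>f. f permutes {1..2 * p} \<and> (a \<circ> f = f \<circ> pcycle p \<or> a \<circ> f = f \<circ> double_pcycle p)"
proof -
  have "card {1..2 * p} < p\<^sup>2"
    using assms(2) by (simp add: power2_eq_square)
  then have "a ^^ p = id"
    using funpow_prime_eq_id assms(1,3,5) by blast
  then interpret perm_of_prime_order p a
    using assms(1,3) by unfold_locales
  obtain x where x: "a x \<noteq> x"
    using assms(4) by (auto simp: fun_eq_iff)
  then have "x \<in> {1..2 * p}"
    using permutes_not_in[OF assms(3)] by blast
  show ?thesis
  proof (cases "\<forall>y \<in> {1..2 * p} - orbit x. a y = y")
    case True
    then show ?thesis
      using conj_pcycle_if_fixes_outside_orbit \<open>x \<in> {1..2 * p}\<close> x by blast
  next
    case False
    then show ?thesis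
      using conj_double_pcycle_if_two_orbits \<open>x \<in> {1..2 * p}\<close> x by blast
  qed
qed

lemma p_element_conj_standard:
  assumes "prime p" "3 \<le> p" "a permutes {1..2 * p}" "a \<noteq> id" "a ^^ (p ^ k) = id"
  obtains f s where "f permutes {1..2 * p}" "s = pcycle p \<or> s = double_pcycle p"
    "a = f \<circ> s \<circ> inv' f"
  using p_element_conj_pcycle_or_double_pcycle[OF assms] eq_conj_if_comp_eq by metis

section \<open>A single \<open>p\<close>-cycle\<close>

definition reflect :: "nat \<Rightarrow> nat \<Rightarrow> nat" where
  "reflect p k = (if 1 \<le> k \<and> k \<le> p then Suc p - k else k)"

lemma reflect_permutes: "reflect p permutes {1..n}" if "p \<le> n"
  by (rule inj_imp_permutes) (use that in \<open>auto simp: reflect_def inj_on_def split: if_splits\<close>)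

lemma inv_reflect: "inv' (reflect p) = reflect p"
  by (rule inv_unique_comp) (auto simp: reflect_def fun_eq_iff)

lemma inv_pcycle:
  assumes "1 \<le> p"
  shows "inv' (pcycle p) = reflect p \<circ> pcycle p \<circ> reflect p"
proof (rule inv_unique_comp)
  show "pcycle p \<circ> (reflect p \<circ> pcycle p \<circ> reflect p) = id"
  proof
    fix k
    consider "k = 1" | "2 \<le> k" "k \<le> p" | "k = 0 \<or> k > p"
      by linarith
    then show "(pcycle p \<circ> (reflect p \<circ> pcycle p \<circ> reflect p)) k = id k"
      by cases (use assms in \<open>auto simp: reflect_def pcycle_def\<close>)
  qed
  show "reflect p \<circ> pcycle p \<circ> reflect p \<circ> pcycle p = id"
  proof
    fix k
    consider "k = p" | "1 \<le> k" "k < p" | "k = 0 \<or> k > p"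
      by linarith
    then show "(reflect p \<circ> pcycle p \<circ> reflect p \<circ> pcycle p) k = id k"
      by cases (use assms in \<open>auto simp: reflect_def pcycle_def\<close>)
  qed
qed

lemma exists_conj_pcycle_fixing:
  assumes "X \<subseteq> {1..2 * p}" "card X \<le> p"
  obtains g where "g permutes {1..2 * p}" "\<And>z. z \<in> X \<Longrightarrow> (g \<circ> pcycle p \<circ> inv' g) z = z"
proof -
  obtain g where g: "g permutes {1..2 * p}" "X \<subseteq> g ` {p + 1..2 * p}"
    using exists_permutes_image_superset[of "{1..2 * p}" X "{p + 1..2 * p}"] assms by auto
  have "(g \<circ> pcycle p \<circ> inv' g) z = z" if z: "z \<in> X" for z
  proof -
    obtain y where "y \<in> {p + 1..2 * p}" "z = g y"
      using g(2) z by auto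
    then show ?thesis
      using permutes_inverses(2)[OF g(1)] by (simp add: pcycle_def)
  qed
  with g(1) show ?thesis
    using that by blast
qed

lemma inv_comp_conj_transpose_moved:
  assumes "a permutes S" "(inv' a \<circ> (transpose u v \<circ> a \<circ> transpose u v)) z \<noteq> z"
  shows "z \<in> {u, v, inv' a u, inv' a v}"
proof (rule ccontr)
  assume z: "z \<notin> {u, v, inv' a u, inv' a v}"
  then have "a z \<noteq> u" "a z \<noteq> v"
    using permutes_inverses(2)[OF assms(1)] by force+
  then show False
    using z assms(2) permutes_inverses(2)[OF assms(1)] by simp
qed

lemma killing_irreducible_pcycle:
  assumes "4 \<le> p"
  shows "killing_irreducible (sym_group (2 * p)) (conj_class (sym_group (2 * p)) (pcycle p))"
proof -
  let ?a = "pcycle p"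
  interpret sym_class "2 * p" ?a
    by unfold_locales (use assms pcycle_permutes in simp)
  have inv_a: "inv' ?a \<in> C"
    using conj_in_C[OF a_in_C reflect_permutes[of p "2 * p"]] inv_pcycle inv_reflect assms
    by simp
  have "inv' ?a 1 = p"
    using assms by (simp add: permutes_inv_eq[OF a_permutes] pcycle_def)
  moreover have "?a 1 = 2"
    using assms by (simp add: pcycle_def)
  ultimately have "?a \<noteq> inv' ?a"
    using assms by auto
  then have inv_a_a: "(inv' ?a, ?a) \<in> E"
    using edge_sym edge_inv inv_a by blast
  show ?thesis
  proof (rule irreducible_if_swap_connected)
    fix u v
    assume uv: "u \<in> S" "v \<in> S" "u \<noteq> v"
    define b where "b = transpose u v \<circ> ?a \<circ> transpose u v"
    have b: "b \<in> C"
      using conj_in_C[OF a_in_C permutes_swap_id[OF uv(1,2)]] by (simp add: b_def)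
    let ?X = "{u, v, inv' ?a u, inv' ?a v}"
    have "?X \<subseteq> S"
      using uv permutes_in_image[OF permutes_inv[OF a_permutes]] by auto
    moreover have "card ?X \<le> p"
      using card_length[of "[u, v, inv' ?a u, inv' ?a v]"] assms by simp
    ultimately obtain g where g: "g permutes S" "\<And>z. z \<in> ?X \<Longrightarrow> (g \<circ> ?a \<circ> inv' g) z = z"
      by (rule exists_conj_pcycle_fixing) auto
    show "swap_connected u v"
    proof (cases "inv' ?a = b")
      case False
      then have "(inv' ?a, b) \<in> E"
        using edge_if_fixes_support[OF inv_a b _ conj_in_C[OF a_in_C g(1)]] g(2)
          inv_comp_conj_transpose_moved[OF a_permutes] by (simp add: b_def)
      then show ?thesis
        using inv_a_a edge_sym unfolding b_def
        by (meson converse_rtrancl_into_rtrancl r_into_rtrancl)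
    qed (use inv_a_a b_def in auto)
  qed
qed

lemma commutes_with_odd_pcycle:
  assumes "2 \<le> p"
  shows "commutes_with_odd (2 * p) (pcycle p)"
proof -
  let ?h = "transpose (p + 1) (p + 2)"
  have "?h \<circ> pcycle p = pcycle p \<circ> ?h"
  proof (rule comp_commute_if_disjoint_supports[where X = "{1..p}"])
    show "inj (pcycle p)"
      using permutes_inj[OF pcycle_permutes[of p p]] assms by simp
    show "x \<in> {1..p}" if "pcycle p x \<noteq> x" for x
      using that assms by (simp add: pcycle_def split: if_splits)
    show "?h x = x" if "x \<in> {1..p}" for x
      using that by (intro transpose_apply_other) auto
  qed simp
  moreover have "?h permutes {1..2 * p}"
    using assms by (intro permutes_swap_id) auto
  moreover have "\<not> evenperm ?h"
    by (simp add: evenperm_swap)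
  ultimately show ?thesis
    unfolding commutes_with_odd_def by blast
qed

section \<open>Two disjoint \<open>p\<close>-cycles\<close>

definition upper_pcycle :: "nat \<Rightarrow> nat \<Rightarrow> nat" where
  "upper_pcycle p k = (if p < k \<and> k < 2 * p then Suc k else if k = 2 * p then Suc p else k)"

lemma upper_pcycle_permutes: "upper_pcycle p permutes {1..2 * p}" if "1 \<le> p"
  by (rule inj_imp_permutes) (use that in \<open>auto simp: upper_pcycle_def inj_on_def split: if_splits\<close>)

lemma pcycle_comp_double_pcycle: "pcycle p \<circ> double_pcycle p = double_pcycle p \<circ> pcycle p"
  by (auto simp: fun_eq_iff pcycle_def double_pcycle_def)

lemma upper_pcycle_comp_double_pcycle:
  "upper_pcycle p \<circ> double_pcycle p = double_pcycle p \<circ> upper_pcycle p"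
  by (auto simp: fun_eq_iff upper_pcycle_def double_pcycle_def)

lemma funpow_pcycle: "m < p \<Longrightarrow> (pcycle p ^^ m) 1 = Suc m"
  by (induction m) (auto simp: pcycle_def)

lemma funpow_upper_pcycle: "m < p \<Longrightarrow> (upper_pcycle p ^^ m) (Suc p) = Suc p + m"
  by (induction m) (auto simp: upper_pcycle_def)

lemma exists_rotation:
  assumes "1 \<le> i" "i \<le> p" "p < j" "j \<le> 2 * p"
  shows "\<exists>\<rho>. \<rho> permutes {1..2 * p} \<and> \<rho> \<circ> double_pcycle p = double_pcycle p \<circ> \<rho>
    \<and> \<rho> 1 = i \<and> \<rho> (Suc p) = j"
proof -
  let ?s = "double_pcycle p"
  let ?A = "pcycle p ^^ (i - 1)" and ?B = "upper_pcycle p ^^ (j - p - 1)"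
  have A: "?A \<circ> ?s = ?s \<circ> ?A" and B: "?B \<circ> ?s = ?s \<circ> ?B"
    by (simp_all add: funpow_comp_commute pcycle_comp_double_pcycle upper_pcycle_comp_double_pcycle)
  have "?A \<circ> ?B permutes {1..2 * p}"
    using assms
    by (intro permutes_compose permutes_funpow pcycle_permutes upper_pcycle_permutes) simp_all
  moreover have "(?A \<circ> ?B) \<circ> ?s = ?s \<circ> (?A \<circ> ?B)"
  proof -
    have "(?A \<circ> ?B) \<circ> ?s = ?A \<circ> (?s \<circ> ?B)"
      by (simp only: comp_assoc B)
    also have "\<dots> = ?s \<circ> (?A \<circ> ?B)"
      by (simp only: comp_assoc[symmetric] A)
    finally show ?thesis .
  qed
  moreover have "?B 1 = 1"
    by (rule funpow_fixpoint) (use assms in \<open>simp add: upper_pcycle_def\<close>)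
  then have "(?A \<circ> ?B) 1 = i"
    using funpow_pcycle[of "i - 1" p] assms by simp
  moreover have "?A j = j"
    by (rule funpow_fixpoint) (use assms in \<open>simp add: pcycle_def\<close>)
  then have "(?A \<circ> ?B) (Suc p) = j"
    using funpow_upper_pcycle[of "j - p - 1" p] assms by simp
  ultimately show ?thesis
    by blast
qed

text \<open>\<open>zigzag p m\<close> is the \<open>m\<close>-th point of the orbit \<open>1, p + 2, \<dots>, 2 p, p + 1, 2, \<dots>, p\<close> of \<open>1\<close>
  under the \<open>2 p\<close>-cycle \<open>double_pcycle p \<circ> transpose 1 (p + 1)\<close>. Relabelling the points by
  \<open>zigzag_index\<close> turns the square of that cycle into \<open>double_pcycle p\<close>.\<close>
definition zigzag :: "nat \<Rightarrow> nat \<Rightarrow> nat" where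
  "zigzag p m = (if m = 0 then 1 else if m < p then p + 1 + m else if m = p then p + 1 else m - p + 1)"

definition zigzag_index :: "nat \<Rightarrow> nat \<Rightarrow> nat" where
  "zigzag_index p i = (if i \<le> p then 2 * i - 2 else 2 * (i - p) - 1)"

definition zigzag_relabel :: "nat \<Rightarrow> nat \<Rightarrow> nat" where
  "zigzag_relabel p i = (if i \<in> {1..2 * p} then zigzag p (zigzag_index p i) else i)"

lemma double_pcycle_transpose_zigzag:
  assumes "3 \<le> p" "m < 2 * p"
  shows "double_pcycle p (transpose 1 (p + 1) (zigzag p m)) = zigzag p (Suc m mod (2 * p))"
proof -
  consider "m = 0" | "1 \<le> m" "m + 2 \<le> p" | "m + 1 = p" | "m = p" | "p + 1 \<le> m" "m + 2 \<le> 2 * p"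
    | "m + 1 = 2 * p"
    using assms by linarith
  then show ?thesis
  proof cases
    case 1
    then have "Suc m mod (2 * p) = 1"
      using assms by simp
    then show ?thesis
      using 1 assms by (simp add: zigzag_def double_pcycle_def transpose_def)
  next
    case 2
    then have "Suc m mod (2 * p) = Suc m"
      using assms by simp
    then show ?thesis
      using 2 assms by (simp add: zigzag_def double_pcycle_def transpose_def)
  next
    case 3
    then have "Suc m mod (2 * p) = p"
      using assms by simp
    then show ?thesis
      using 3 assms by (auto simp add: zigzag_def double_pcycle_def transpose_def)
  next
    case 4
    then have "Suc m mod (2 * p) = Suc p"
      using assms by simp
    then show ?thesis
      using 4 assms by (simp add: zigzag_def double_pcycle_def transpose_def)
  next
    case 5
    then have "Suc m mod (2 * p) = Suc m"
      using assms by simp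
    then show ?thesis
      using 5 assms by (auto simp add: zigzag_def double_pcycle_def transpose_def)
  next
    case 6
    then have "Suc m mod (2 * p) = 0"
      using assms by simp
    then show ?thesis
      using 6 assms by (auto simp add: zigzag_def double_pcycle_def transpose_def)
  qed
qed

lemma zigzag_index_less: "i \<in> {1..2 * p} \<Longrightarrow> zigzag_index p i < 2 * p"
  by (auto simp: zigzag_index_def)

lemma zigzag_index_double_pcycle:
  assumes "2 \<le> p" "i \<in> {1..2 * p}"
  shows "zigzag_index p (double_pcycle p i) = (zigzag_index p i + 2) mod (2 * p)"
proof -
  consider "1 \<le> i" "i < p" | "i = p" | "p < i" "i < 2 * p" | "i = 2 * p"
    using assms by force
  then show ?thesis
  proof cases
    case 1
    then show ?thesis
      using assms by (simp add: zigzag_index_def double_pcycle_def)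
  next
    case 2
    then have "Suc (Suc (2 * p - 2)) = 2 * p"
      using assms by simp
    then show ?thesis
      using 2 assms by (simp add: zigzag_index_def double_pcycle_def)
  next
    case 3
    then have "(2 * (i - p) - 1 + 2) mod (2 * p) = 2 * (Suc i - p) - 1"
      using assms by simp
    then show ?thesis
      using 3 assms by (simp add: zigzag_index_def double_pcycle_def)
  next
    case 4
    then have "(2 * (i - p) - 1 + 2) mod (2 * p) = 1"
      using assms by (simp add: mod_if)
    then show ?thesis
      using 4 assms by (simp add: zigzag_index_def double_pcycle_def)
  qed
qed

lemma zigzag_relabel_permutes: "zigzag_relabel p permutes {1..2 * p}"
proof (rule inj_imp_permutes)
  have index_inj: "inj_on (zigzag_index p) {1..2 * p}"
    unfolding inj_on_def zigzag_index_def by (auto split: if_splits; presburger)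
  have zigzag_inj: "inj_on (zigzag p) {0..<2 * p}"
    unfolding inj_on_def zigzag_def by (auto split: if_splits)
  show "inj_on (zigzag_relabel p) {1..2 * p}"
  proof (rule inj_onI)
    fix i j
    assume ij: "i \<in> {1..2 * p}" "j \<in> {1..2 * p}" "zigzag_relabel p i = zigzag_relabel p j"
    then have "zigzag p (zigzag_index p i) = zigzag p (zigzag_index p j)"
      by (simp add: zigzag_relabel_def)
    then have "zigzag_index p i = zigzag_index p j"
      using inj_onD[OF zigzag_inj] zigzag_index_less ij(1,2) by simp
    then show "i = j"
      using inj_onD[OF index_inj] ij(1,2) by blast
  qed
  show "zigzag_relabel p i \<in> {1..2 * p}" if "i \<in> {1..2 * p}" for i
    using that zigzag_index_less[OF that] by (auto simp: zigzag_relabel_def zigzag_def)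
qed (auto simp: zigzag_relabel_def)

lemma square_double_pcycle_transpose:
  assumes "3 \<le> p"
  shows "(double_pcycle p \<circ> transpose 1 (p + 1)) \<circ> (double_pcycle p \<circ> transpose 1 (p + 1))
    = zigzag_relabel p \<circ> double_pcycle p \<circ> inv' (zigzag_relabel p)"
proof (rule eq_conj_if_comp_eq[OF zigzag_relabel_permutes], rule ext)
  fix i
  let ?T = "transpose 1 (p + 1)"
  have s: "double_pcycle p permutes {1..2 * p}"
    using double_pcycle_permutes assms by simp
  show "((double_pcycle p \<circ> ?T) \<circ> (double_pcycle p \<circ> ?T) \<circ> zigzag_relabel p) i
      = (zigzag_relabel p \<circ> double_pcycle p) i"
  proof (cases "i \<in> {1..2 * p}")
    case True
    have "((double_pcycle p \<circ> ?T) \<circ> (double_pcycle p \<circ> ?T) \<circ> zigzag_relabel p) i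
        = double_pcycle p (?T (double_pcycle p (?T (zigzag p (zigzag_index p i)))))"
      using True by (simp add: zigzag_relabel_def)
    also have "\<dots> = zigzag p (Suc (Suc (zigzag_index p i) mod (2 * p)) mod (2 * p))"
      using double_pcycle_transpose_zigzag[OF assms zigzag_index_less[OF True]]
        double_pcycle_transpose_zigzag[OF assms, of "Suc (zigzag_index p i) mod (2 * p)"] assms
      by simp
    also have "\<dots> = zigzag p ((zigzag_index p i + 2) mod (2 * p))"
      by (simp add: mod_Suc_eq)
    also have "\<dots> = zigzag_relabel p (double_pcycle p i)"
      using zigzag_index_double_pcycle[OF _ True] permutes_in_image[OF s] True assms
      by (simp add: zigzag_relabel_def)
    finally show ?thesis
      by simp
  next
    case False
    have "?T i = i"
      using False assms by (intro transpose_apply_other) auto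
    moreover have "zigzag_relabel p i = i"
      unfolding zigzag_relabel_def using False by (rule if_not_P)
    ultimately show ?thesis
      using permutes_not_in[OF s False] by simp
  qed
qed

lemma killing_irreducible_double_pcycle:
  assumes "3 \<le> p"
  shows "killing_irreducible (sym_group (2 * p)) (conj_class (sym_group (2 * p)) (double_pcycle p))"
proof -
  let ?a = "double_pcycle p" and ?T = "transpose 1 (p + 1)"
  interpret sym_class "2 * p" ?a
    by unfold_locales (use assms double_pcycle_permutes in simp)
  have base: "swap_connected 1 (p + 1)"
  proof -
    define b where "b = ?T \<circ> ?a \<circ> ?T"
    have b: "b \<in> C"
      using conj_in_C[OF a_in_C permutes_swap_id[of 1 S "p + 1"]] assms by (simp add: b_def)
    have "?a \<circ> b = (?a \<circ> ?T) \<circ> (?a \<circ> ?T)"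
      by (simp add: b_def comp_assoc)
    then have "?a \<circ> b \<in> C"
      using conj_in_C[OF a_in_C zigzag_relabel_permutes] square_double_pcycle_transpose[OF assms]
      by simp
    moreover have "?a (p + 1) \<noteq> b (p + 1)"
      using assms by (simp add: b_def double_pcycle_def transpose_def)
    ultimately have "(?a, b) \<in> E"
      using edge_if_product_in_C[OF a_in_C b] by blast
    then show ?thesis
      using edge_sym b_def by blast
  qed
  have cross: "swap_connected i j" if ij: "1 \<le> i" "i \<le> p" "p < j" "j \<le> 2 * p" for i j
  proof -
    obtain \<rho> where \<rho>: "\<rho> permutes S" "\<rho> \<circ> ?a = ?a \<circ> \<rho>" "\<rho> 1 = i" "\<rho> (Suc p) = j"
      using exists_rotation[OF ij] by blast
    show ?thesis
      using swap_connected_conj[OF \<rho>(1,2) base] \<rho>(3,4) by simp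
  qed
  show ?thesis
  proof (rule irreducible_if_swap_connected)
    fix u v
    assume uv: "u \<in> S" "v \<in> S" "u \<noteq> v"
    consider "u \<le> p" "p < v" | "v \<le> p" "p < u" | "u \<le> p" "v \<le> p" | "p < u" "p < v"
      by linarith
    then show "swap_connected u v"
    proof cases
      case 1
      then show ?thesis
        using cross uv by simp
    next
      case 2
      then show ?thesis
        using cross[of v u] uv swap_connected_commute[of u v] by simp
    next
      case 3
      then show ?thesis
        using swap_connected_trans[of u v "p + 1"] cross[of u "p + 1"] cross[of v "p + 1"]
          swap_connected_commute[of v "p + 1"] uv assms by simp
    next
      case 4
      then show ?thesis
        using swap_connected_trans[of u v 1] cross[of 1 u] cross[of 1 v]
          swap_connected_commute[of u 1] uv assms by simp
    qed
  qed
qed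

definition swap_blocks :: "nat \<Rightarrow> nat \<Rightarrow> nat \<Rightarrow> nat" where
  "swap_blocks p m k = (if 1 \<le> k \<and> k \<le> m then k + p else if p < k \<and> k \<le> p + m then k - p else k)"

lemma swapidseq_swap_blocks: "m \<le> p \<Longrightarrow> swapidseq m (swap_blocks p m)"
proof (induction m)
  case 0
  have "swap_blocks p 0 = id"
    by (auto simp: swap_blocks_def fun_eq_iff)
  then show ?case
    by (metis swapidseq.id)
next
  case (Suc m)
  have "swap_blocks p (Suc m) = transpose (Suc m) (Suc m + p) \<circ> swap_blocks p m"
    using Suc(2) by (auto simp: swap_blocks_def fun_eq_iff transpose_def)
  moreover have "swapidseq (Suc m) (transpose (Suc m) (Suc m + p) \<circ> swap_blocks p m)"
    by (rule swapidseq.comp_Suc) (use Suc in auto)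
  ultimately show ?case
    by metis
qed

lemma commutes_with_odd_double_pcycle:
  assumes "odd p"
  shows "commutes_with_odd (2 * p) (double_pcycle p)"
proof -
  have "swap_blocks p p permutes {1..2 * p}"
    by (rule inj_imp_permutes) (auto simp: swap_blocks_def inj_on_def split: if_splits)
  moreover have "\<not> evenperm (swap_blocks p p)"
    using evenperm_unique[OF swapidseq_swap_blocks[of p p]] assms by simp
  moreover have "swap_blocks p p \<circ> double_pcycle p = double_pcycle p \<circ> swap_blocks p p"
  proof
    fix k
    have "1 \<le> p"
      using assms by (cases p) simp_all
    then consider "1 \<le> k" "k < p" | "k = p" | "p < k" "k < 2 * p" | "k = 2 * p" | "k = 0 \<or> 2 * p < k"
      by linarith
    then show "(swap_blocks p p \<circ> double_pcycle p) k = (double_pcycle p \<circ> swap_blocks p p) k"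
      by cases (use \<open>1 \<le> p\<close> in \<open>auto simp: swap_blocks_def double_pcycle_def\<close>)
  qed
  ultimately show ?thesis
    unfolding commutes_with_odd_def by blast
qed

lemma killing_irreducible_sym_group_p_element:
  assumes "prime p" "5 \<le> p" "a permutes {1..2 * p}" "a \<noteq> id" "a ^^ (p ^ k) = id"
  shows "killing_irreducible (sym_group (2 * p)) (conj_class (sym_group (2 * p)) a)"
proof -
  have "3 \<le> p"
    using assms(2) by simp
  then obtain f s where f: "f permutes {1..2 * p}" "s = pcycle p \<or> s = double_pcycle p"
    "a = f \<circ> s \<circ> inv' f"
    using p_element_conj_standard assms(1,3-5) by blast
  from f(2) have "killing_irreducible (sym_group (2 * p)) (conj_class (sym_group (2 * p)) s)"
    using killing_irreducible_pcycle killing_irreducible_double_pcycle assms(2)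
    by (elim disjE) simp_all
  then show ?thesis
    unfolding f(3) conj_class_sym_group_conj[OF f(1)] .
qed

lemma commutes_with_odd_p_element:
  assumes "prime p" "5 \<le> p" "a permutes {1..2 * p}" "a \<noteq> id" "a ^^ (p ^ k) = id"
  shows "commutes_with_odd (2 * p) a"
proof -
  have "3 \<le> p"
    using assms(2) by simp
  then obtain f s where f: "f permutes {1..2 * p}" "s = pcycle p \<or> s = double_pcycle p"
    "a = f \<circ> s \<circ> inv' f"
    using p_element_conj_standard assms(1,3-5) by blast
  have "odd p"
    using prime_odd_nat assms(1,2) by simp
  with f(2) have "commutes_with_odd (2 * p) s"
    using commutes_with_odd_pcycle commutes_with_odd_double_pcycle assms(2)
    by (elim disjE) simp_all
  then show ?thesis
    unfolding f(3) using commutes_with_odd_conj[OF f(1)] by blast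
qed

lemma p_element_permutes:
  assumes "G = sym_group n \<or> G = alt_group n" "p_element G p a"
  obtains k where "a permutes {1..n}" "a ^^ (p ^ k) = id"
proof -
  have "group G"
    using assms(1) sym_group_is_group alt_group_is_group by auto
  obtain k where "group.ord G a = p ^ k" and "a \<in> carrier G"
    using assms(2) unfolding p_element_def by blast
  then have "a [^]\<^bsub>G\<^esub> (p ^ k) = \<one>\<^bsub>G\<^esub>"
    using group.pow_ord_eq_1[OF \<open>group G\<close> \<open>a \<in> carrier G\<close>] by simp
  with \<open>a \<in> carrier G\<close> have "a permutes {1..n}" "a ^^ (p ^ k) = id"
    using assms(1) by (auto simp: pow_sym_group pow_alt_group sym_group_one alt_group_one
        sym_group_carrier alt_group_carrier)
  then show ?thesis
    using that by blast
qed

theorem proposition7p7: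
  fixes p :: nat and G :: "(nat \<Rightarrow> nat) monoid" and a :: "nat \<Rightarrow> nat"
  assumes "prime p" and "p \<ge> 5"
    and "G = sym_group (2 * p) \<or> G = alt_group (2 * p)"
    and "a \<in> carrier G" and "a \<noteq> \<one>\<^bsub>G\<^esub>" and "p_element G p a"
  shows "killing_irreducible G (conj_class G a)"
proof -
  obtain k where "a permutes {1..2 * p}" "a ^^ (p ^ k) = id"
    using p_element_permutes[OF assms(3,6)] .
  moreover have "a \<noteq> id"
    using assms(3,5) by (auto simp: sym_group_one alt_group_one)
  ultimately have sym: "killing_irreducible (sym_group (2 * p)) (conj_class (sym_group (2 * p)) a)"
    and odd: "commutes_with_odd (2 * p) a"
    using killing_irreducible_sym_group_p_element commutes_with_odd_p_element assms(1,2) by blast+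
  show ?thesis
    using assms(3)
  proof
    assume "G = alt_group (2 * p)"
    then show ?thesis
      using killing_irreducible_alt_group[OF _ odd sym] assms(4) by simp
  qed (use sym in simp)
qed

end
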